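(* Let $\mathbb G$ be a homogeneous Lie group, $\delta>0$ and $P\in\bar{\operatorname T}_{<\delta}$. If for some $\varepsilon\in[0,1]$ one has $|(X^I\Pi_eP)(e)|\le\varepsilon^{\delta-d(I)}$ for all multi-indices $I\in\mathbb N^d$ with $d(I)<\delta$, then $|P|_a\lesssim_{\delta,\mathbb G}\varepsilon^{\delta-a}$ for all $a\le\delta$.
   Context: $\mathbb{G}$ is a connected, simply connected Lie group with Lie algebra $\mathfrak g$ (identified with left-invariant vector fields) equipped with dilations $D_r=\exp(\log r\,\mathfrak s)$ (Lie algebra automorphisms, $\mathfrak s$ diagonalisable with smallest eigenvalue $1$); basis $X_1,\dots,X_d$ with $\mathfrak sX_j=\mathfrak s_jX_j$; coordinates $\eta_j=\zeta_j\circ\exp^{-1}$ ($\zeta_j$ the dual basis); for $I\in\mathbb N^d$, $\eta^I=\prod\eta_j^{i_j}$, $d(I)=\sum\mathfrak s_ji_j$, $X^I=X_1^{i_1}\cdots X_d^{i_d}$. $\bar{\operatorname T}$ is the vector space with basis the abstract monomials $\pmb\eta^I$, $I\in\mathbb N^d$, graded by $\bar{\operatorname T}_a=\mathrm{span}\{\pmb\eta^I:d(I)=a\}$, each $\bar{\operatorname T}_a$ equipped with a fixed norm; for $P\in\bar{\operatorname T}$, $|P|_a$ is the norm of its $\bar{\operatorname T}_a$-component, and $\bar{\operatorname T}_{<\delta}=\bigoplus_{a<\delta}\bar{\operatorname T}_a$. $\Pi_e$ is the linear map sending $\pmb\eta^I$ to the function $\eta^I$ on $\mathbb G$. *)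

theory Defs
  imports "HOL-Analysis.Analysis"
begin

fun Ck :: "nat \<Rightarrow> ('a::euclidean_space \<Rightarrow> real) \<Rightarrow> bool" where
  "Ck 0 f = continuous_on UNIV f"
| "Ck (Suc k) f = (f differentiable_on UNIV \<and>
      (\<forall>v. Ck k (\<lambda>x. frechet_derivative f (at x) v)))"

definition smooth_fun :: "('a::euclidean_space \<Rightarrow> real) \<Rightarrow> bool" where
  "smooth_fun f \<longleftrightarrow> (\<forall>k. Ck k f)"

text \<open>The group is modelled on R^d in exponential coordinates: the point x
  is exp(sum_j x_j X_j).  Left-invariant vector field X_j:\<close>
definition lvf :: "((real, 'n::finite) vec \<Rightarrow> (real, 'n) vec \<Rightarrow> (real, 'n) vec) \<Rightarrow> 'n \<Rightarrow>
    ((real, 'n) vec \<Rightarrow> real) \<Rightarrow> (real, 'n) vec \<Rightarrow> real" where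
  "lvf mul j f x = deriv (\<lambda>t. f (mul x (t *\<^sub>R axis j 1))) 0"

definition XI :: "((real, 'n::{finite,linorder}) vec \<Rightarrow> (real, 'n) vec \<Rightarrow> (real, 'n) vec) \<Rightarrow> ('n \<Rightarrow> nat) \<Rightarrow>
    ((real, 'n) vec \<Rightarrow> real) \<Rightarrow> (real, 'n) vec \<Rightarrow> real" where
  "XI mul I f = foldr (\<lambda>j g. (lvf mul j ^^ I j) g) (sorted_list_of_set UNIV) f"

definition hdeg :: "('n::finite \<Rightarrow> real) \<Rightarrow> ('n \<Rightarrow> nat) \<Rightarrow> real" where
  "hdeg s I = (\<Sum>j\<in>UNIV. s j * real (I j))"

text \<open>Coordinate monomial eta^I and the realisation map Pi_e (abstract
  polynomials are coefficient functions on multi-indices).\<close>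
definition eta_mono :: "('n::finite \<Rightarrow> nat) \<Rightarrow> (real, 'n) vec \<Rightarrow> real" where
  "eta_mono I x = (\<Prod>j\<in>UNIV. (x $ j) ^ I j)"

definition Pi_e :: "(('n::finite \<Rightarrow> nat) \<Rightarrow> real) \<Rightarrow> (real, 'n) vec \<Rightarrow> real" where
  "Pi_e c x = (\<Sum>I\<in>{I. c I \<noteq> 0}. c I * eta_mono I x)"

definition hcomp :: "('n::finite \<Rightarrow> real) \<Rightarrow> (('n \<Rightarrow> nat) \<Rightarrow> real) \<Rightarrow> real \<Rightarrow> (('n \<Rightarrow> nat) \<Rightarrow> real)" where
  "hcomp s c a = (\<lambda>I. if hdeg s I = a then c I else 0)"

definition grade_space :: "('n::finite \<Rightarrow> real) \<Rightarrow> real \<Rightarrow> (('n \<Rightarrow> nat) \<Rightarrow> real) set" where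
  "grade_space s a = {c. \<forall>I. hdeg s I \<noteq> a \<longrightarrow> c I = 0}"

definition norm_on :: "('b \<Rightarrow> real) set \<Rightarrow> (('b \<Rightarrow> real) \<Rightarrow> real) \<Rightarrow> bool" where
  "norm_on V N \<longleftrightarrow>
     (\<forall>c\<in>V. N c \<ge> 0 \<and> (N c = 0 \<longrightarrow> c = (\<lambda>_. 0))) \<and>
     (\<forall>c\<in>V. \<forall>r. N (\<lambda>I. r * c I) = \<bar>r\<bar> * N c) \<and>
     (\<forall>c\<in>V. \<forall>c'\<in>V. N (\<lambda>I. c I + c' I) \<le> N c + N c')"

definition dil :: "('n::finite \<Rightarrow> real) \<Rightarrow> real \<Rightarrow> (real, 'n) vec \<Rightarrow> (real, 'n) vec" where
  "dil s r x = (\<chi> j. r powr s j * x $ j)"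

end

theory Submission
  imports Defs
begin

text \<open>Expand \<open>P = \<Sum>\<^sub>J c\<^sub>J \<eta>\<^sup>J\<close> over the finitely many \<open>J\<close> with \<open>d(J) < \<delta>\<close> and put
  \<open>M\<^sub>I\<^sub>J = (X\<^sup>I \<eta>\<^sup>J)(e)\<close>. Left-invariant vector fields are derivations with \<open>(X\<^sub>l \<eta>\<^sub>k)(e) = [l = k]\<close>,
  so a word of length \<open>n\<close> kills \<open>\<eta>\<^sup>J\<close> at \<open>e\<close> when \<open>n < |J|\<close>, and for \<open>n = |J|\<close> it yields \<open>J!\<close> if it
  is a rearrangement of \<open>J\<close> and 0 otherwise; as the \<open>X\<^sub>j\<close> are homogeneous under the dilations,
  \<open>M\<^sub>I\<^sub>J\<close> also vanishes unless \<open>d(I) = d(J)\<close>. So \<open>M\<close> is triangular with respect to \<open>|J|\<close>, has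
  diagonal \<open>J! \<ge> 1\<close> and only couples multi-indices of equal homogeneous degree. Forward
  substitution in \<open>(X\<^sup>I \<Pi>\<^sub>e P)(e) = \<Sum>\<^sub>J M\<^sub>I\<^sub>J c\<^sub>J\<close> bounds \<open>|c\<^sub>J|\<close> by a constant times
  \<open>\<epsilon>\<^bsup>\<delta> - d(J)\<^esup>\<close>, and the triangle inequality for \<open>|\<cdot>|\<^sub>a\<close> bounds each homogeneous component.\<close>

section \<open>Smooth functions\<close>

lemma Ck_Suc_imp_Ck: "Ck (Suc k) f \<Longrightarrow> Ck k f"
proof (induction k arbitrary: f)
  case 0
  then show ?case by (auto intro: differentiable_imp_continuous_on)
next
  case (Suc k)
  then show ?case by auto
qed

lemma Ck_Suc_has_derivative:
  "Ck (Suc k) f \<Longrightarrow> (f has_derivative frechet_derivative f (at x)) (at x)"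
  by (auto simp: differentiable_on_def frechet_derivative_works[symmetric])

lemma Ck_const: "Ck k (\<lambda>_. c)"
proof (induction k arbitrary: c)
  case 0 then show ?case by simp
next
  case (Suc k)
  have "frechet_derivative (\<lambda>_. c) (at x) = (\<lambda>_. 0)" for x
    using frechet_derivative_at[OF has_derivative_const] by metis
  then show ?case using Suc by simp
qed

lemma Ck_bounded_linear:
  fixes L :: "'a::euclidean_space \<Rightarrow> real"
  assumes "bounded_linear L"
  shows "Ck k L"
proof (cases k)
  case 0
  then show ?thesis using assms by (simp add: linear_continuous_on)
next
  case (Suc k')
  have "frechet_derivative L (at x) = L" for x
    using frechet_derivative_at[OF bounded_linear.has_derivative[OF assms has_derivative_ident]]
    by simp
  moreover have "L differentiable_on UNIV"
    using assms by (simp add: differentiable_on_def bounded_linear_imp_differentiable)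
  ultimately show ?thesis using Suc by (simp add: Ck_const)
qed

lemma Ck_add: "Ck k f \<Longrightarrow> Ck k g \<Longrightarrow> Ck k (\<lambda>x. f x + g x)"
proof (induction k arbitrary: f g)
  case 0 then show ?case by (auto intro: continuous_on_add)
next
  case (Suc k)
  have "frechet_derivative (\<lambda>x. f x + g x) (at x) =
      (\<lambda>v. frechet_derivative f (at x) v + frechet_derivative g (at x) v)" for x
    using frechet_derivative_at[OF has_derivative_add[OF Ck_Suc_has_derivative[OF Suc.prems(1)]
          Ck_Suc_has_derivative[OF Suc.prems(2)]]]
    by simp
  moreover have "(\<lambda>x. f x + g x) differentiable_on UNIV"
    using Suc.prems by (auto intro: differentiable_on_add)
  ultimately show ?case using Suc by simp
qed

lemma Ck_mult: "Ck k f \<Longrightarrow> Ck k g \<Longrightarrow> Ck k (\<lambda>x. f x * g x :: real)"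
proof (induction k arbitrary: f g)
  case 0 then show ?case by (auto intro: continuous_on_mult)
next
  case (Suc k)
  have "frechet_derivative (\<lambda>x. f x * g x) (at x) =
      (\<lambda>v. f x * frechet_derivative g (at x) v + frechet_derivative f (at x) v * g x)" for x
    using frechet_derivative_at[OF has_derivative_mult[OF Ck_Suc_has_derivative[OF Suc.prems(1)]
          Ck_Suc_has_derivative[OF Suc.prems(2)]]]
    by simp
  moreover have "(\<lambda>x. f x * g x) differentiable_on UNIV"
    using Suc.prems by (auto intro: differentiable_on_mult)
  moreover have "Ck k f" "Ck k g" using Suc.prems Ck_Suc_imp_Ck by blast+
  ultimately show ?case using Suc by (simp add: Ck_add)
qed

lemma Ck_sum: "finite A \<Longrightarrow> (\<And>i. i \<in> A \<Longrightarrow> Ck k (f i)) \<Longrightarrow> Ck k (\<lambda>x. \<Sum>i\<in>A. f i x)"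
  by (induction A rule: finite_induct) (auto simp: Ck_const Ck_add)

lemma Ck_prod:
  "finite A \<Longrightarrow> (\<And>i. i \<in> A \<Longrightarrow> Ck k (f i)) \<Longrightarrow> Ck k (\<lambda>x. \<Prod>i\<in>A. f i x :: real)"
  by (induction A rule: finite_induct) (auto simp: Ck_const Ck_mult)

lemma Ck_power: "Ck k f \<Longrightarrow> Ck k (\<lambda>x. f x ^ n :: real)"
  by (induction n) (auto simp: Ck_const Ck_mult)

lemma frechet_derivative_compose_componentwise:
  fixes F :: "'a::euclidean_space \<Rightarrow> 'b::euclidean_space" and g :: "'b \<Rightarrow> real"
  assumes g: "(g has_derivative frechet_derivative g (at (F x))) (at (F x))"
    and F: "\<And>b. b \<in> Basis \<Longrightarrow>
      ((\<lambda>x. F x \<bullet> b) has_derivative frechet_derivative (\<lambda>x. F x \<bullet> b) (at x)) (at x)"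
  shows "((\<lambda>x. g (F x)) has_derivative
      (\<lambda>v. \<Sum>b\<in>Basis. frechet_derivative (\<lambda>x. F x \<bullet> b) (at x) v * frechet_derivative g (at (F x)) b))
      (at x)"
proof -
  define F' where "F' v = (\<Sum>b\<in>Basis. frechet_derivative (\<lambda>x. F x \<bullet> b) (at x) v *\<^sub>R b)" for v
  have "F' v \<bullet> b = frechet_derivative (\<lambda>x. F x \<bullet> b) (at x) v" if "b \<in> Basis" for b v
    using that by (simp add: F'_def inner_sum_left inner_Basis if_distrib cong: if_cong)
  then have "((\<lambda>x. F x \<bullet> b) has_derivative (\<lambda>v. F' v \<bullet> b)) (at x)" if "b \<in> Basis" for b
    using F[OF that] that by simp
  then have "(F has_derivative F') (at x)"
    by (subst has_derivative_componentwise_within) auto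
  from has_derivative_compose[OF this g]
  have "((\<lambda>x. g (F x)) has_derivative (\<lambda>v. frechet_derivative g (at (F x)) (F' v))) (at x)"
    by (simp add: o_def)
  moreover have "linear (frechet_derivative g (at (F x)))"
    using g has_derivative_linear by blast
  ultimately show ?thesis
    unfolding F'_def by (simp add: linear_sum linear_scale)
qed

lemma Ck_compose:
  fixes F :: "'a::euclidean_space \<Rightarrow> 'b::euclidean_space" and g :: "'b \<Rightarrow> real"
  shows "Ck k g \<Longrightarrow> (\<And>b. b \<in> Basis \<Longrightarrow> Ck k (\<lambda>x. F x \<bullet> b)) \<Longrightarrow> Ck k (\<lambda>x. g (F x))"
proof (induction k arbitrary: g F)
  case 0
  have "continuous_on UNIV F"
    using 0 by (subst continuous_on_componentwise) auto
  then show ?case using 0 by (auto intro: continuous_on_compose2)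
next
  case (Suc k)
  have deriv: "((\<lambda>x. g (F x)) has_derivative (\<lambda>v. \<Sum>b\<in>Basis.
      frechet_derivative (\<lambda>x. F x \<bullet> b) (at x) v * frechet_derivative g (at (F x)) b)) (at x)" for x
    by (intro frechet_derivative_compose_componentwise Ck_Suc_has_derivative[OF Suc.prems(1)]
        Ck_Suc_has_derivative[OF Suc.prems(2)])
  then have differentiable: "(\<lambda>x. g (F x)) differentiable_on UNIV"
    by (auto simp: differentiable_on_def differentiable_def)
  have chain_rule: "frechet_derivative (\<lambda>x. g (F x)) (at x) v =
      (\<Sum>b\<in>Basis. frechet_derivative (\<lambda>x. F x \<bullet> b) (at x) v * frechet_derivative g (at (F x)) b)"
    for x v
    by (simp add: frechet_derivative_at[OF deriv, symmetric])
  have "Ck k (\<lambda>x. frechet_derivative (\<lambda>x. g (F x)) (at x) v)" for v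
  proof -
    have "Ck k (\<lambda>x. frechet_derivative (\<lambda>x. F x \<bullet> b) (at x) v * frechet_derivative g (at (F x)) b)"
      if b: "b \<in> Basis" for b
    proof (rule Ck_mult)
      show "Ck k (\<lambda>x. frechet_derivative (\<lambda>x. F x \<bullet> b) (at x) v)"
        using Suc.prems(2)[OF b] by simp
      show "Ck k (\<lambda>x. frechet_derivative g (at (F x)) b)"
      proof (rule Suc.IH)
        show "Ck k (\<lambda>y. frechet_derivative g (at y) b)"
          using Suc.prems(1) by simp
        show "Ck k (\<lambda>x. F x \<bullet> c)" if "c \<in> Basis" for c
          using Suc.prems(2)[OF that] Ck_Suc_imp_Ck by blast
      qed
    qed
    then show ?thesis
      unfolding chain_rule by (intro Ck_sum) auto
  qed
  with differentiable show ?case by simp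
qed

lemma smooth_fun_const: "smooth_fun (\<lambda>x. c)"
  unfolding smooth_fun_def by (auto intro!: Ck_const)

lemma smooth_fun_vec_nth: "smooth_fun (\<lambda>x::(real, 'n::finite) vec. x $ k)"
  unfolding smooth_fun_def by (auto intro!: Ck_bounded_linear)

lemma smooth_fun_mult: "smooth_fun f \<Longrightarrow> smooth_fun g \<Longrightarrow> smooth_fun (\<lambda>x. f x * g x)"
  unfolding smooth_fun_def by (auto intro!: Ck_mult)

lemma smooth_fun_sum:
  "finite A \<Longrightarrow> (\<And>i. i \<in> A \<Longrightarrow> smooth_fun (f i)) \<Longrightarrow> smooth_fun (\<lambda>x. \<Sum>i\<in>A. f i x)"
  unfolding smooth_fun_def by (auto intro!: Ck_sum)

lemma smooth_fun_prod:
  "finite A \<Longrightarrow> (\<And>i. i \<in> A \<Longrightarrow> smooth_fun (f i)) \<Longrightarrow> smooth_fun (\<lambda>x. \<Prod>i\<in>A. f i x)"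
  unfolding smooth_fun_def by (auto intro!: Ck_prod)

lemma smooth_fun_power: "smooth_fun f \<Longrightarrow> smooth_fun (\<lambda>x. f x ^ n)"
  unfolding smooth_fun_def by (auto intro!: Ck_power)

lemma smooth_fun_eta_mono: "smooth_fun (eta_mono J)"
  unfolding eta_mono_def by (intro smooth_fun_prod finite smooth_fun_power smooth_fun_vec_nth)

lemma smooth_fun_frechet_derivative:
  assumes "smooth_fun f"
  shows "smooth_fun (\<lambda>x. frechet_derivative f (at x) v)"
  unfolding smooth_fun_def
proof
  fix k
  have "Ck (Suc k) f" using assms smooth_fun_def by blast
  then show "Ck k (\<lambda>x. frechet_derivative f (at x) v)" by simp
qed

lemma smooth_fun_compose_bounded_linear:
  fixes F :: "'a::euclidean_space \<Rightarrow> 'b::euclidean_space"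
  assumes "smooth_fun g" and "bounded_linear F"
  shows "smooth_fun (\<lambda>x. g (F x))"
  unfolding smooth_fun_def
proof
  fix k
  have "Ck k g" using assms(1) by (simp add: smooth_fun_def)
  then show "Ck k (\<lambda>x. g (F x))"
    by (rule Ck_compose)
      (auto intro!: Ck_bounded_linear bounded_linear_compose[OF bounded_linear_inner_left] assms(2))
qed

section \<open>Left-invariant vector fields as derivations\<close>

definition dec_index :: "('n \<Rightarrow> nat) \<Rightarrow> 'n \<Rightarrow> ('n \<Rightarrow> nat)" where
  "dec_index J k = J(k := J k - 1)"

definition total_deg :: "('n::finite \<Rightarrow> nat) \<Rightarrow> nat" where
  "total_deg J = (\<Sum>j\<in>UNIV. J j)"

lemma total_deg_dec_index: "J k > 0 \<Longrightarrow> total_deg (dec_index J k) = total_deg J - 1"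
proof -
  assume "J k > 0"
  moreover have "total_deg J = J k + (\<Sum>j\<in>UNIV-{k}. J j)"
    unfolding total_deg_def by (rule sum.remove) auto
  moreover have "total_deg (dec_index J k) = (J k - 1) + (\<Sum>j\<in>UNIV-{k}. J j)"
    unfolding total_deg_def by (subst sum.remove) (auto simp: dec_index_def)
  ultimately show ?thesis by simp
qed

lemma eta_mono_dec_index:
  "eta_mono (dec_index J k) x = x $ k ^ (J k - 1) * (\<Prod>j\<in>UNIV-{k}. x $ j ^ J j)"
  unfolding eta_mono_def by (subst prod.remove) (auto simp: dec_index_def)

lemma eta_mono_at_0: "total_deg J > 0 \<Longrightarrow> eta_mono J 0 = 0"
proof -
  assume "total_deg J > 0"
  then obtain k where "J k > 0" unfolding total_deg_def by (metis gr0I sum.neutral)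
  then show ?thesis unfolding eta_mono_def by (intro prod_zero) auto
qed

locale smooth_unital_mul =
  fixes mul :: "(real, 'n::finite) vec \<Rightarrow> (real, 'n) vec \<Rightarrow> (real, 'n) vec"
  assumes smooth_mul: "\<And>i. smooth_fun (\<lambda>p. mul (fst p) (snd p) $ i)"
    and mul_0_left: "\<And>x. mul 0 x = x"
    and mul_0_right: "\<And>x. mul x 0 = x"
begin

lemma smooth_fun_compose_mul:
  assumes "smooth_fun f"
  shows "smooth_fun (\<lambda>p. f (mul (fst p) (snd p)))"
  unfolding smooth_fun_def
proof
  fix k
  show "Ck k (\<lambda>p. f (mul (fst p) (snd p)))"
  proof (rule Ck_compose[where g = f and F = "\<lambda>p. mul (fst p) (snd p)"])
    show "Ck k f" using assms smooth_fun_def by blast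
    fix b :: "(real, 'n) vec" assume "b \<in> Basis"
    then obtain i where "\<And>x. x \<bullet> b = x $ i" by (auto simp: Basis_vec_def inner_axis)
    moreover have "Ck k (\<lambda>p. mul (fst p) (snd p) $ i)"
      using smooth_mul unfolding smooth_fun_def by blast
    ultimately show "Ck k (\<lambda>p. mul (fst p) (snd p) \<bullet> b)" by simp
  qed
qed

lemma has_real_derivative_mul_axis_frechet:
  assumes "smooth_fun f"
  shows "((\<lambda>t. f (mul x (t *\<^sub>R axis j 1))) has_real_derivative
      frechet_derivative (\<lambda>p. f (mul (fst p) (snd p))) (at (x, 0)) (0, axis j 1)) (at 0)"
proof -
  define G where "G = (\<lambda>p. f (mul (fst p) (snd p)))"
  define D where "D = frechet_derivative G (at (x, 0))"
  have "Ck (Suc 0) G"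
    using smooth_fun_compose_mul[OF assms] unfolding G_def smooth_fun_def by blast
  then have dG: "(G has_derivative D) (at ((\<lambda>t. (x, t *\<^sub>R axis j 1)) 0))"
    using Ck_Suc_has_derivative[of 0 G "(x, 0)"] unfolding D_def by simp
  have "((\<lambda>t. (x, t *\<^sub>R axis j 1)) has_derivative (\<lambda>t. (0, t *\<^sub>R axis j 1))) (at 0)"
    by (intro has_derivative_Pair has_derivative_const bounded_linear_imp_has_derivative
        bounded_linear_scaleR_left)
  from has_derivative_compose[OF this dG]
  have "((\<lambda>t. G (x, t *\<^sub>R axis j 1)) has_derivative (\<lambda>t. D (0, t *\<^sub>R axis j 1))) (at 0)"
    by (simp add: o_def)
  moreover have "(\<lambda>t. D (0, t *\<^sub>R axis j 1)) = (\<lambda>t. D (0, axis j 1) * t)"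
    using linear_scale[OF has_derivative_linear[OF dG], of _ "(0, axis j 1)"]
    by (simp add: mult.commute)
  ultimately show ?thesis
    unfolding has_field_derivative_def G_def D_def by simp
qed

lemma lvf_eq_frechet_derivative:
  "smooth_fun f \<Longrightarrow>
    lvf mul j f x = frechet_derivative (\<lambda>p. f (mul (fst p) (snd p))) (at (x, 0)) (0, axis j 1)"
  unfolding lvf_def using has_real_derivative_mul_axis_frechet by (rule DERIV_imp_deriv)

lemma has_real_derivative_lvf:
  "smooth_fun f \<Longrightarrow> ((\<lambda>t. f (mul x (t *\<^sub>R axis j 1))) has_real_derivative lvf mul j f x) (at 0)"
  using has_real_derivative_mul_axis_frechet lvf_eq_frechet_derivative by simp

lemma smooth_fun_lvf:
  assumes "smooth_fun f"
  shows "smooth_fun (lvf mul j f)"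
proof -
  have "smooth_fun (\<lambda>x. frechet_derivative (\<lambda>p. f (mul (fst p) (snd p))) (at (x, 0)) (0, axis j 1))"
    using smooth_fun_frechet_derivative[OF smooth_fun_compose_mul[OF assms]]
    by (rule smooth_fun_compose_bounded_linear) (simp add: bounded_linear_Pair bounded_linear_ident)
  then show ?thesis
    unfolding lvf_eq_frechet_derivative[OF assms] .
qed

lemma lvf_add:
  "smooth_fun f \<Longrightarrow> smooth_fun g \<Longrightarrow>
    lvf mul j (\<lambda>x. f x + g x) = (\<lambda>x. lvf mul j f x + lvf mul j g x)"
  unfolding lvf_def[of mul j "\<lambda>x. f x + g x"]
  by (intro ext DERIV_imp_deriv DERIV_add has_real_derivative_lvf)

lemma lvf_cmult: "smooth_fun f \<Longrightarrow> lvf mul j (\<lambda>x. c * f x) = (\<lambda>x. c * lvf mul j f x)"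
  unfolding lvf_def[of mul j "\<lambda>x. c * f x"]
  by (intro ext DERIV_imp_deriv DERIV_cmult has_real_derivative_lvf)

lemma lvf_sum:
  "finite A \<Longrightarrow> (\<And>i. i \<in> A \<Longrightarrow> smooth_fun (f i)) \<Longrightarrow>
    lvf mul j (\<lambda>x. \<Sum>i\<in>A. f i x) = (\<lambda>x. \<Sum>i\<in>A. lvf mul j (f i) x)"
  unfolding lvf_def[of mul j "\<lambda>x. \<Sum>i\<in>A. f i x"]
  by (intro ext DERIV_imp_deriv DERIV_sum has_real_derivative_lvf)

lemma lvf_mult:
  assumes "smooth_fun f" "smooth_fun g"
  shows "lvf mul j (\<lambda>x. f x * g x) x = lvf mul j f x * g x + f x * lvf mul j g x"
proof -
  have "((\<lambda>t. f (mul x (t *\<^sub>R axis j 1)) * g (mul x (t *\<^sub>R axis j 1))) has_real_derivative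
      f x * lvf mul j g x + lvf mul j f x * g x) (at 0)"
    using DERIV_mult'[OF has_real_derivative_lvf[OF assms(1)] has_real_derivative_lvf[OF assms(2)]]
    by (simp add: mul_0_right)
  then show ?thesis
    unfolding lvf_def[of mul j "\<lambda>x. f x * g x"] by (simp add: DERIV_imp_deriv)
qed

lemma lvf_power:
  assumes "smooth_fun f"
  shows "lvf mul j (\<lambda>x. f x ^ n) x = real n * f x ^ (n - 1) * lvf mul j f x"
proof -
  have "((\<lambda>t. f (mul x (t *\<^sub>R axis j 1)) ^ n) has_real_derivative
      real n * lvf mul j f x * f x ^ (n - 1)) (at 0)"
    using DERIV_power[OF has_real_derivative_lvf[OF assms], of x j n]
    by (simp add: mul_0_right mult.assoc)
  then show ?thesis
    unfolding lvf_def[of mul j "\<lambda>x. f x ^ n"] by (simp add: DERIV_imp_deriv mult_ac)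
qed

lemma lvf_prod:
  assumes "finite A" "\<And>i. i \<in> A \<Longrightarrow> smooth_fun (f i)"
  shows "lvf mul j (\<lambda>x. \<Prod>i\<in>A. f i x) x = (\<Sum>i\<in>A. lvf mul j (f i) x * (\<Prod>k\<in>A - {i}. f k x))"
proof -
  have "((\<lambda>t. \<Prod>i\<in>A. f i (mul x (t *\<^sub>R axis j 1))) has_derivative
      (\<lambda>y. \<Sum>i\<in>A. lvf mul j (f i) x * y * (\<Prod>k\<in>A - {i}. f k (mul x (0 *\<^sub>R axis j 1))))) (at 0)"
    using has_real_derivative_lvf[OF assms(2)]
    by (intro has_derivative_prod) (simp add: has_field_derivative_def)
  moreover have "(\<lambda>y. \<Sum>i\<in>A. lvf mul j (f i) x * y * (\<Prod>k\<in>A - {i}. f k (mul x (0 *\<^sub>R axis j 1))))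
      = (*) (\<Sum>i\<in>A. lvf mul j (f i) x * (\<Prod>k\<in>A - {i}. f k x))"
    by (simp add: fun_eq_iff mul_0_right sum_distrib_left mult_ac)
  ultimately have "((\<lambda>t. \<Prod>i\<in>A. f i (mul x (t *\<^sub>R axis j 1))) has_real_derivative
      (\<Sum>i\<in>A. lvf mul j (f i) x * (\<Prod>k\<in>A - {i}. f k x))) (at 0)"
    unfolding has_field_derivative_def by simp
  then show ?thesis
    unfolding lvf_def[of mul j "\<lambda>x. \<Prod>i\<in>A. f i x"] by (rule DERIV_imp_deriv)
qed

lemma lvf_vec_nth_at_0: "lvf mul j (\<lambda>x. x $ k) 0 = (if j = k then 1 else 0)"
proof -
  have "((\<lambda>t. mul 0 (t *\<^sub>R axis j 1) $ k) has_real_derivative (if j = k then 1 else 0)) (at 0)"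
    using DERIV_cmult_Id[of "if j = k then 1 else 0"] by (simp add: mul_0_left axis_def)
  then show ?thesis
    unfolding lvf_def by (rule DERIV_imp_deriv)
qed

lemma lvf_eta_mono:
  "lvf mul j (eta_mono J) x = (\<Sum>k\<in>UNIV. real (J k) * lvf mul j (\<lambda>x. x $ k) x * eta_mono (dec_index J k) x)"
proof -
  have "lvf mul j (eta_mono J) x =
      (\<Sum>k\<in>UNIV. lvf mul j (\<lambda>x. x $ k ^ J k) x * (\<Prod>i\<in>UNIV - {k}. x $ i ^ J i))"
    unfolding eta_mono_def by (intro lvf_prod finite smooth_fun_power smooth_fun_vec_nth)
  also have "\<dots> = (\<Sum>k\<in>UNIV. real (J k) * lvf mul j (\<lambda>x. x $ k) x * eta_mono (dec_index J k) x)"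
    by (intro sum.cong refl) (simp add: lvf_power smooth_fun_vec_nth eta_mono_dec_index)
  finally show ?thesis .
qed

lemma smooth_fun_lvf_word: "smooth_fun f \<Longrightarrow> smooth_fun (foldr (lvf mul) L f)"
  by (induction L) (auto intro: smooth_fun_lvf)

lemma lvf_word_cmult:
  "smooth_fun f \<Longrightarrow> foldr (lvf mul) L (\<lambda>x. c * f x) = (\<lambda>x. c * foldr (lvf mul) L f x)"
  by (induction L) (simp_all add: lvf_cmult smooth_fun_lvf_word)

lemma lvf_word_add:
  "smooth_fun f \<Longrightarrow> smooth_fun g \<Longrightarrow>
    foldr (lvf mul) L (\<lambda>x. f x + g x) = (\<lambda>x. foldr (lvf mul) L f x + foldr (lvf mul) L g x)"
  by (induction L) (simp_all add: lvf_add smooth_fun_lvf_word)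

lemma lvf_word_sum:
  "finite A \<Longrightarrow> (\<And>i. i \<in> A \<Longrightarrow> smooth_fun (f i)) \<Longrightarrow>
    foldr (lvf mul) L (\<lambda>x. \<Sum>i\<in>A. f i x) = (\<lambda>x. \<Sum>i\<in>A. foldr (lvf mul) L (f i) x)"
  by (induction L) (simp_all add: lvf_sum smooth_fun_lvf_word)

lemma lvf_mult_eta_mono:
  assumes "smooth_fun g"
  shows "lvf mul l (\<lambda>x. g x * eta_mono J x) = (\<lambda>x. lvf mul l g x * eta_mono J x +
      (\<Sum>k\<in>UNIV. real (J k) * (g x * lvf mul l (\<lambda>x. x $ k) x * eta_mono (dec_index J k) x)))"
  by (simp add: fun_eq_iff lvf_mult[OF assms smooth_fun_eta_mono] lvf_eta_mono
      sum_distrib_left mult_ac)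

lemma lvf_word_snoc_mult_eta_mono:
  assumes "smooth_fun g"
  shows "foldr (lvf mul) (L @ [l]) (\<lambda>x. g x * eta_mono J x) 0 =
    foldr (lvf mul) L (\<lambda>x. lvf mul l g x * eta_mono J x) 0 +
    (\<Sum>k\<in>UNIV. real (J k) *
      foldr (lvf mul) L (\<lambda>x. g x * lvf mul l (\<lambda>x. x $ k) x * eta_mono (dec_index J k) x) 0)"
proof -
  have smooth_term: "smooth_fun (\<lambda>x. g x * lvf mul l (\<lambda>x. x $ k) x * eta_mono (dec_index J k) x)"
    for k by (intro smooth_fun_mult assms smooth_fun_lvf smooth_fun_vec_nth smooth_fun_eta_mono)
  have "foldr (lvf mul) (L @ [l]) (\<lambda>x. g x * eta_mono J x) =
      foldr (lvf mul) L (\<lambda>x. lvf mul l g x * eta_mono J x +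
        (\<Sum>k\<in>UNIV. real (J k) * (g x * lvf mul l (\<lambda>x. x $ k) x * eta_mono (dec_index J k) x)))"
    by (simp add: lvf_mult_eta_mono[OF assms])
  also have "\<dots> = (\<lambda>x. foldr (lvf mul) L (\<lambda>x. lvf mul l g x * eta_mono J x) x +
      (\<Sum>k\<in>UNIV. real (J k) *
        foldr (lvf mul) L (\<lambda>x. g x * lvf mul l (\<lambda>x. x $ k) x * eta_mono (dec_index J k) x) x))"
    by (simp add: lvf_word_add lvf_word_sum lvf_word_cmult smooth_term smooth_fun_mult
        smooth_fun_lvf smooth_fun_eta_mono smooth_fun_const smooth_fun_sum assms)
  finally show ?thesis by simp
qed

end

definition word_coeff :: "'n list \<Rightarrow> ('n::finite \<Rightarrow> nat) \<Rightarrow> real" where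
  "word_coeff L J = (if \<forall>j. count_list L j = J j then \<Prod>j\<in>UNIV. fact (J j) else 0)"

lemma word_coeff_snoc: "word_coeff (L @ [l]) J = real (J l) * word_coeff L (dec_index J l)"
proof (cases "J l = 0")
  case True
  moreover have "count_list (L @ [l]) l \<noteq> 0" by simp
  ultimately have "\<not> (\<forall>j. count_list (L @ [l]) j = J j)" by metis
  then show ?thesis using True unfolding word_coeff_def by simp
next
  case False
  have "(\<forall>j. count_list (L @ [l]) j = J j) \<longleftrightarrow> (\<forall>j. count_list L j = dec_index J l j)"
    using False by (auto simp: dec_index_def)
  moreover have "(\<Prod>j\<in>UNIV. fact (J j) :: real) = real (J l) * (\<Prod>j\<in>UNIV. fact (dec_index J l j))"
  proof -
    have "(\<Prod>j\<in>UNIV. fact (J j) :: real) = fact (J l) * (\<Prod>j\<in>UNIV-{l}. fact (J j))"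
      by (rule prod.remove) auto
    moreover have "(\<Prod>j\<in>UNIV. fact (dec_index J l j) :: real) =
        fact (J l - 1) * (\<Prod>j\<in>UNIV-{l}. fact (J j))"
      by (subst prod.remove) (auto simp: dec_index_def)
    moreover have "fact (J l) = real (J l) * (fact (J l - 1) :: real)"
      using False fact_reduce by auto
    ultimately show ?thesis by simp
  qed
  ultimately show ?thesis unfolding word_coeff_def by simp
qed

context smooth_unital_mul
begin

text \<open>Induction on the innermost (last) letter \<open>X\<^sub>l\<close> of the word: it falls either on \<open>g\<close>, after
  which the rest of the word is too short for the monomial, or on a factor \<open>x\<^sub>k\<close>, producing
  \<open>X\<^sub>l x\<^sub>k\<close>, which is \<open>[l = k]\<close> at the origin.\<close>
lemma lvf_word_mult_eta_mono_at_0: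
  assumes "smooth_fun g" "length L \<le> total_deg J"
  shows "foldr (lvf mul) L (\<lambda>x. g x * eta_mono J x) 0 =
    (if length L = total_deg J then g 0 * word_coeff L J else 0)"
  using assms
proof (induction L arbitrary: g J rule: rev_induct)
  case Nil
  show ?case
  proof (cases "total_deg J = 0")
    case True
    then have "J = (\<lambda>_. 0)" by (auto simp: total_deg_def fun_eq_iff)
    then show ?thesis by (simp add: eta_mono_def word_coeff_def total_deg_def)
  qed (simp add: eta_mono_at_0)
next
  case (snoc l L)
  have lvf_term: "foldr (lvf mul) L (\<lambda>x. lvf mul l g x * eta_mono J x) 0 = 0"
    using snoc.IH[OF smooth_fun_lvf[OF snoc.prems(1)]] snoc.prems(2) by simp
  have coord_term: "real (J k) *
      foldr (lvf mul) L (\<lambda>x. g x * lvf mul l (\<lambda>x. x $ k) x * eta_mono (dec_index J k) x) 0 =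
      (if k = l \<and> length (L @ [l]) = total_deg J
       then real (J l) * g 0 * word_coeff L (dec_index J l) else 0)" for k
  proof (cases "J k = 0")
    case False
    then have "total_deg (dec_index J k) = total_deg J - 1"
      by (simp add: total_deg_dec_index)
    then show ?thesis
      using snoc.IH[OF smooth_fun_mult[OF snoc.prems(1) smooth_fun_lvf[OF smooth_fun_vec_nth]],
          of "dec_index J k"] snoc.prems(2)
      by (auto simp: lvf_vec_nth_at_0)
  qed auto
  show ?case
    unfolding lvf_word_snoc_mult_eta_mono[OF snoc.prems(1)] lvf_term coord_term
    by (simp add: word_coeff_snoc)
qed

end

section \<open>Homogeneity under dilations\<close>

lemma bounded_linear_dil: "bounded_linear (dil s r)"
proof -
  have "linear (dil s r)"
    by (rule linearI) (simp_all add: dil_def vec_eq_iff ring_distribs mult.left_commute)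
  then show ?thesis by (simp add: linear_conv_bounded_linear)
qed

lemma dil_zero: "dil s r 0 = 0"
  by (simp add: dil_def vec_eq_iff)

lemma dil_scaleR_axis: "dil s r (t *\<^sub>R axis l 1) = (r powr s l * t) *\<^sub>R axis l 1"
  by (simp add: dil_def vec_eq_iff axis_def)

lemma eta_mono_dil: "r > 0 \<Longrightarrow> eta_mono J (dil s r x) = r powr hdeg s J * eta_mono J x"
proof -
  assume r: "r > 0"
  have "eta_mono J (dil s r x) = (\<Prod>j\<in>UNIV. (r powr s j) ^ J j) * eta_mono J x"
    unfolding eta_mono_def dil_def by (simp add: power_mult_distrib prod.distrib)
  also have "(\<Prod>j\<in>UNIV. (r powr s j) ^ J j) = r powr (\<Sum>j\<in>UNIV. s j * real (J j))"
    using r by (simp add: powr_power powr_sum mult.commute)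
  finally show ?thesis unfolding hdeg_def .
qed

locale homogeneous_mul = smooth_unital_mul mul
  for mul :: "(real, 'n::finite) vec \<Rightarrow> (real, 'n) vec \<Rightarrow> (real, 'n) vec" +
  fixes s :: "'n \<Rightarrow> real"
  assumes mul_dil: "\<And>r x y. r > 0 \<Longrightarrow> mul (dil s r x) (dil s r y) = dil s r (mul x y)"
begin

lemma lvf_compose_dil:
  assumes r: "r > 0" and f: "smooth_fun f"
  shows "lvf mul l (\<lambda>x. f (dil s r x)) x = r powr s l * lvf mul l f (dil s r x)"
proof -
  define c where "c = r powr s l"
  have curve: "f (dil s r (mul x (t *\<^sub>R axis l 1))) = f (mul (dil s r x) ((c * t) *\<^sub>R axis l 1))" for t
    using mul_dil[OF r] by (simp add: c_def flip: dil_scaleR_axis)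
  have "((\<lambda>t. f (mul (dil s r x) ((c * t) *\<^sub>R axis l 1))) has_real_derivative
      lvf mul l f (dil s r x) * c) (at 0)"
    using DERIV_chain'[OF DERIV_cmult_Id[of c], of "\<lambda>u. f (mul (dil s r x) (u *\<^sub>R axis l 1))"]
      has_real_derivative_lvf[OF f]
    by simp
  then show ?thesis
    unfolding lvf_def[of mul l "\<lambda>x. f (dil s r x)"] curve c_def
    by (simp add: DERIV_imp_deriv mult.commute)
qed

lemma lvf_word_compose_dil:
  assumes "r > 0" "smooth_fun f"
  shows "foldr (lvf mul) L (\<lambda>x. f (dil s r x)) =
    (\<lambda>x. r powr (\<Sum>l\<leftarrow>L. s l) * foldr (lvf mul) L f (dil s r x))"
proof (induction L)
  case Nil then show ?case using assms(1) by simp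
next
  case (Cons l L)
  have smooth: "smooth_fun (\<lambda>x. foldr (lvf mul) L f (dil s r x))"
    using smooth_fun_lvf_word[OF assms(2)] bounded_linear_dil
    by (rule smooth_fun_compose_bounded_linear)
  have "foldr (lvf mul) (l # L) (\<lambda>x. f (dil s r x)) =
      lvf mul l (\<lambda>x. r powr (\<Sum>l\<leftarrow>L. s l) * foldr (lvf mul) L f (dil s r x))"
    using Cons by simp
  also have "\<dots> = (\<lambda>x. r powr (\<Sum>l\<leftarrow>L. s l) * lvf mul l (\<lambda>x. foldr (lvf mul) L f (dil s r x)) x)"
    by (rule lvf_cmult[OF smooth])
  also have "\<dots> = (\<lambda>x. r powr (\<Sum>l\<leftarrow>l # L. s l) * foldr (lvf mul) (l # L) f (dil s r x))"
    using lvf_compose_dil[OF assms(1) smooth_fun_lvf_word[OF assms(2)]]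
    by (simp add: powr_add mult_ac)
  finally show ?case .
qed

text \<open>Evaluate \<open>X\<^sup>L (\<eta>\<^sup>J \<circ> D\<^sub>2) = 2\<^bsup>wt L\<^esup> (X\<^sup>L \<eta>\<^sup>J) \<circ> D\<^sub>2\<close> at the fixed point 0 of \<open>D\<^sub>2\<close>, using
  \<open>\<eta>\<^sup>J \<circ> D\<^sub>2 = 2\<^bsup>d(J)\<^esup> \<eta>\<^sup>J\<close>.\<close>
lemma lvf_word_eta_mono_at_0_eq_0:
  assumes "(\<Sum>l\<leftarrow>L. s l) \<noteq> hdeg s J"
  shows "foldr (lvf mul) L (eta_mono J) 0 = 0"
proof -
  have "2 powr hdeg s J * foldr (lvf mul) L (eta_mono J) 0 =
      2 powr (\<Sum>l\<leftarrow>L. s l) * foldr (lvf mul) L (eta_mono J) 0"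
    using fun_cong[OF lvf_word_compose_dil[of 2 "eta_mono J" L], of 0]
    by (simp add: eta_mono_dil smooth_fun_eta_mono lvf_word_cmult dil_zero)
  moreover have "(2::real) powr hdeg s J \<noteq> 2 powr (\<Sum>l\<leftarrow>L. s l)"
    using assms powr_inj[of 2 "hdeg s J" "\<Sum>l\<leftarrow>L. s l"] by simp
  ultimately show ?thesis by simp
qed

end

section \<open>The matrix of derivatives of monomials\<close>

definition index_word :: "('n::{finite,linorder} \<Rightarrow> nat) \<Rightarrow> 'n list" where
  "index_word I = concat (map (\<lambda>j. replicate (I j) j) (sorted_list_of_set UNIV))"

lemma foldr_concat_replicate:
  "foldr h (concat (map (\<lambda>j. replicate (I j) j) xs)) = foldr (\<lambda>j. h j ^^ I j) xs"
  by (induction xs) (simp_all add: fun_eq_iff)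

lemma XI_eq_lvf_word: "XI mul I f = foldr (lvf mul) (index_word I) f"
  unfolding XI_def index_word_def foldr_concat_replicate ..

lemma count_list_replicate: "count_list (replicate n j) k = (if j = k then n else 0)"
  by (induction n) auto

lemma count_list_index_word: "count_list (index_word I) k = I k"
proof -
  have "distinct xs \<Longrightarrow>
      count_list (concat (map (\<lambda>j. replicate (I j) j) xs)) k = (if k \<in> set xs then I k else 0)"
    for xs by (induction xs) (auto simp: count_list_0_iff count_list_replicate)
  then show ?thesis unfolding index_word_def by simp
qed

lemma length_index_word: "length (index_word I) = total_deg I"
proof -
  have "distinct xs \<Longrightarrow> length (concat (map (\<lambda>j. replicate (I j) j) xs)) = (\<Sum>j\<in>set xs. I j)"
    for xs by (induction xs) auto
  then show ?thesis unfolding index_word_def total_deg_def by simp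
qed

lemma weight_index_word: "(\<Sum>l\<leftarrow>index_word I. s l) = hdeg s I"
proof -
  have "distinct xs \<Longrightarrow>
      (\<Sum>l\<leftarrow>concat (map (\<lambda>j. replicate (I j) j) xs). s l) = (\<Sum>j\<in>set xs. s j * real (I j))"
    for xs by (induction xs) (auto simp: sum_list_replicate)
  then show ?thesis unfolding index_word_def hdeg_def by simp
qed

lemma word_coeff_index_word:
  "word_coeff (index_word I) J = (if I = J then \<Prod>j\<in>UNIV. fact (J j) else 0)"
  by (simp add: word_coeff_def count_list_index_word fun_eq_iff)

lemma XI_eta_mono_at_0_self:
  assumes "smooth_unital_mul mul"
  shows "XI mul J (eta_mono J) 0 = (\<Prod>j\<in>UNIV. fact (J j))"
proof -
  interpret smooth_unital_mul mul by fact
  show ?thesis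
    using lvf_word_mult_eta_mono_at_0[OF smooth_fun_const, of "index_word J" J 1]
    by (simp add: XI_eq_lvf_word length_index_word word_coeff_index_word)
qed

lemma XI_eta_mono_at_0_nonzero:
  assumes "homogeneous_mul mul s" "XI mul I (eta_mono J) 0 \<noteq> 0" "I \<noteq> J"
  shows "total_deg J < total_deg I \<and> hdeg s J = hdeg s I"
proof
  interpret homogeneous_mul mul s by fact
  show "hdeg s J = hdeg s I"
    using assms(2) lvf_word_eta_mono_at_0_eq_0[of "index_word I" J]
    by (cases "hdeg s J = hdeg s I") (auto simp: XI_eq_lvf_word weight_index_word)
  show "total_deg J < total_deg I"
  proof (rule ccontr)
    assume "\<not> total_deg J < total_deg I"
    then have "foldr (lvf mul) (index_word I) (\<lambda>x. 1 * eta_mono J x) 0 = 0"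
      using lvf_word_mult_eta_mono_at_0[OF smooth_fun_const, of "index_word I" J 1] assms(3)
      by (simp add: length_index_word word_coeff_index_word)
    with assms(2) show False by (simp add: XI_eq_lvf_word)
  qed
qed

lemma XI_Pi_e_at_0:
  assumes "smooth_unital_mul mul" "finite S" "{I. c I \<noteq> 0} \<subseteq> S"
  shows "XI mul I (Pi_e c) 0 = (\<Sum>J\<in>S. XI mul I (eta_mono J) 0 * c J)"
proof -
  interpret smooth_unital_mul mul by fact
  have "Pi_e c = (\<lambda>x. \<Sum>J\<in>S. c J * eta_mono J x)"
    unfolding Pi_e_def using assms(2,3) by (intro ext sum.mono_neutral_left) auto
  then show ?thesis
    by (simp add: XI_eq_lvf_word lvf_word_sum lvf_word_cmult smooth_fun_mult smooth_fun_const
        smooth_fun_eta_mono assms(2) mult.commute)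
qed

section \<open>Coefficient bounds\<close>

text \<open>Forward substitution, losing a factor \<open>1 + B\<close> per rank.\<close>
lemma triangular_system_bound:
  fixes M :: "'i \<Rightarrow> 'i \<Rightarrow> real" and rk :: "'i \<Rightarrow> nat" and S :: "'i set"
  defines "B \<equiv> \<Sum>I\<in>S. \<Sum>J\<in>S. \<bar>M I J\<bar>"
  assumes "finite S"
    and diag: "\<And>I. I \<in> S \<Longrightarrow> 1 \<le> \<bar>M I I\<bar>"
    and lower: "\<And>I J. I \<in> S \<Longrightarrow> J \<in> S \<Longrightarrow> J \<noteq> I \<Longrightarrow> M I J \<noteq> 0 \<Longrightarrow> rk J < rk I \<and> e J \<le> e I"
    and rhs: "\<And>I. I \<in> S \<Longrightarrow> \<bar>\<Sum>J\<in>S. M I J * c J\<bar> \<le> e I"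
    and "I \<in> S" "rk I \<le> n"
  shows "\<bar>c I\<bar> \<le> (1 + B) ^ n * e I"
proof -
  have B_nonneg: "0 \<le> B"
    unfolding B_def by (intro sum_nonneg) simp
  have row: "\<bar>c I\<bar> \<le> e I + (\<Sum>J\<in>S-{I}. \<bar>M I J\<bar> * \<bar>c J\<bar>)" if "I \<in> S" for I
  proof -
    have "\<bar>c I\<bar> \<le> \<bar>M I I * c I\<bar>"
      using diag[OF that] mult_right_mono[of 1 "\<bar>M I I\<bar>" "\<bar>c I\<bar>"] by (simp add: abs_mult)
    also have "M I I * c I = (\<Sum>J\<in>S. M I J * c J) - (\<Sum>J\<in>S-{I}. M I J * c J)"
      using sum.remove[OF \<open>finite S\<close> that, of "\<lambda>J. M I J * c J"] by simp
    also have "\<bar>\<dots>\<bar> \<le> e I + (\<Sum>J\<in>S-{I}. \<bar>M I J\<bar> * \<bar>c J\<bar>)"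
      using rhs[OF that] sum_abs[of "\<lambda>J. M I J * c J" "S-{I}"] by (simp add: abs_mult)
    finally show ?thesis .
  qed
  show ?thesis
    using \<open>I \<in> S\<close> \<open>rk I \<le> n\<close>
  proof (induction n arbitrary: I)
    case 0
    have "(\<Sum>J\<in>S-{I}. \<bar>M I J\<bar> * \<bar>c J\<bar>) = 0"
      using lower[OF 0(1)] 0(2) by (intro sum.neutral) fastforce
    then show ?case using row[OF 0(1)] by simp
  next
    case (Suc n)
    have e: "0 \<le> e I" using rhs[OF Suc.prems(1)] by linarith
    have "\<bar>M I J\<bar> * \<bar>c J\<bar> \<le> \<bar>M I J\<bar> * ((1 + B) ^ n * e I)" if "J \<in> S - {I}" for J
    proof (cases "M I J = 0")
      case False
      with lower[of I J] that Suc.prems have "rk J \<le> n" "e J \<le> e I" by auto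
      with Suc.IH[of J] that have "\<bar>c J\<bar> \<le> (1 + B) ^ n * e J" by simp
      also have "\<dots> \<le> (1 + B) ^ n * e I"
        using \<open>e J \<le> e I\<close> B_nonneg by (simp add: mult_left_mono)
      finally show ?thesis by (simp add: mult_left_mono)
    qed simp
    then have "(\<Sum>J\<in>S-{I}. \<bar>M I J\<bar> * \<bar>c J\<bar>) \<le> (\<Sum>J\<in>S-{I}. \<bar>M I J\<bar> * ((1 + B) ^ n * e I))"
      by (rule sum_mono)
    also have "\<dots> = (\<Sum>J\<in>S-{I}. \<bar>M I J\<bar>) * ((1 + B) ^ n * e I)"
      by (simp add: sum_distrib_right)
    also have "\<dots> \<le> B * ((1 + B) ^ n * e I)"
    proof (rule mult_right_mono)
      have "(\<Sum>J\<in>S-{I}. \<bar>M I J\<bar>) \<le> (\<Sum>J\<in>S. \<bar>M I J\<bar>)"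
        using \<open>finite S\<close> by (intro sum_mono2) auto
      also have "\<dots> \<le> B"
        unfolding B_def using \<open>finite S\<close> Suc.prems(1)
        by (intro member_le_sum[of _ _ "\<lambda>I. \<Sum>J\<in>S. \<bar>M I J\<bar>"] sum_nonneg) auto
      finally show "(\<Sum>J\<in>S-{I}. \<bar>M I J\<bar>) \<le> B" .
      show "0 \<le> (1 + B) ^ n * e I"
        using e B_nonneg by simp
    qed
    finally have "\<bar>c I\<bar> \<le> (1 + B * (1 + B) ^ n) * e I"
      using row[OF Suc.prems(1)] by (simp add: algebra_simps)
    also have "\<dots> \<le> (1 + B) ^ Suc n * e I"
    proof (rule mult_right_mono[OF _ e])
      have "1 \<le> (1 + B) ^ n"
        using B_nonneg by simp
      then show "1 + B * (1 + B) ^ n \<le> (1 + B) ^ Suc n" by (simp add: algebra_simps)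
    qed
    finally show ?case .
  qed
qed

definition basis_coeff :: "('n \<Rightarrow> nat) \<Rightarrow> ('n \<Rightarrow> nat) \<Rightarrow> real" where
  "basis_coeff J = (\<lambda>I. if I = J then 1 else 0)"

lemma norm_on_grade_space_sum_le:
  assumes N: "norm_on (grade_space s a) N" and "finite A" and "\<And>J. J \<in> A \<Longrightarrow> hdeg s J = a"
  shows "N (\<lambda>I. \<Sum>J\<in>A. d J * basis_coeff J I) \<le> (\<Sum>J\<in>A. \<bar>d J\<bar> * N (basis_coeff J))"
proof -
  have scale: "N (\<lambda>I. r * u I) = \<bar>r\<bar> * N u" if "u \<in> grade_space s a" for r u
    using N that unfolding norm_on_def by blast
  show ?thesis
    using assms(2,3)
  proof (induction A rule: finite_induct)
    case empty
    from scale[of "\<lambda>_. 0" 0] show ?case by (simp add: grade_space_def)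
  next
    case (insert J A)
    have mem: "(\<lambda>I. \<Sum>J\<in>A'. d J * basis_coeff J I) \<in> grade_space s a" if "A' \<subseteq> insert J A" for A'
      using that insert.prems by (auto simp: grade_space_def basis_coeff_def intro!: sum.neutral)
    have "N (\<lambda>I. \<Sum>J\<in>insert J A. d J * basis_coeff J I) \<le>
        N (\<lambda>I. d J * basis_coeff J I) + N (\<lambda>I. \<Sum>J\<in>A. d J * basis_coeff J I)"
      using N mem[of "{J}"] mem[OF subset_insertI] insert.hyps unfolding norm_on_def by simp
    also have "N (\<lambda>I. d J * basis_coeff J I) = \<bar>d J\<bar> * N (basis_coeff J)"
      using scale[of "basis_coeff J" "d J"] insert.prems by (simp add: grade_space_def basis_coeff_def)
    finally show ?case
      using insert by simp
  qed
qed

lemma norm_hcomp_le: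
  assumes norms: "\<And>a. norm_on (grade_space s a) (nrm a)"
    and "finite S" "{I. c I \<noteq> 0} \<subseteq> S"
    and bound: "\<And>J. J \<in> S \<Longrightarrow> \<bar>c J\<bar> \<le> w (hdeg s J)" and "0 \<le> w a"
  shows "nrm a (hcomp s c a) \<le> w a * (\<Sum>J\<in>S. nrm (hdeg s J) (basis_coeff J))"
proof -
  define Sa where "Sa = {J \<in> S. hdeg s J = a}"
  have "finite Sa" "Sa \<subseteq> S" using \<open>finite S\<close> by (auto simp: Sa_def)
  have nrm_nonneg: "0 \<le> nrm (hdeg s J) (basis_coeff J)" for J
    using norms unfolding norm_on_def by (simp add: grade_space_def basis_coeff_def)
  have "hcomp s c a = (\<lambda>I. \<Sum>J\<in>Sa. c J * basis_coeff J I)"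
  proof
    fix I
    have "(\<Sum>J\<in>Sa. c J * basis_coeff J I) = (\<Sum>J\<in>Sa. if J = I then c J else 0)"
      by (intro sum.cong) (auto simp: basis_coeff_def)
    then show "hcomp s c a I = (\<Sum>J\<in>Sa. c J * basis_coeff J I)"
      using \<open>finite Sa\<close> assms(3) by (auto simp: hcomp_def Sa_def)
  qed
  then have "nrm a (hcomp s c a) \<le> (\<Sum>J\<in>Sa. \<bar>c J\<bar> * nrm a (basis_coeff J))"
    using norm_on_grade_space_sum_le[OF norms \<open>finite Sa\<close>] by (simp add: Sa_def)
  also have "\<dots> \<le> (\<Sum>J\<in>Sa. w a * nrm (hdeg s J) (basis_coeff J))"
    using bound nrm_nonneg by (intro sum_mono) (auto simp: Sa_def intro!: mult_right_mono)
  also have "\<dots> \<le> (\<Sum>J\<in>S. w a * nrm (hdeg s J) (basis_coeff J))"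
    using \<open>finite S\<close> \<open>Sa \<subseteq> S\<close> \<open>0 \<le> w a\<close> nrm_nonneg by (intro sum_mono2) auto
  finally show ?thesis by (simp add: sum_distrib_left)
qed

lemma total_deg_le_hdeg: "(\<And>j. 1 \<le> s j) \<Longrightarrow> real (total_deg I) \<le> hdeg s I"
  unfolding total_deg_def hdeg_def of_nat_sum
  by (intro sum_mono) (simp add: mult_right_mono[of 1 _ "real (I _)", simplified])

lemma finite_hdeg_less:
  assumes "\<And>j. 1 \<le> s j"
  shows "finite {I::'n::finite \<Rightarrow> nat. hdeg s I < \<delta>}"
proof (rule finite_subset)
  show "{I. hdeg s I < \<delta>} \<subseteq> Pi\<^sub>E UNIV (\<lambda>_. {..nat \<lceil>\<delta>\<rceil>})"
  proof (clarsimp simp: PiE_UNIV_domain)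
    fix I :: "'n \<Rightarrow> nat" and j assume "hdeg s I < \<delta>"
    moreover have "I j \<le> total_deg I"
      unfolding total_deg_def by (rule member_le_sum) auto
    ultimately show "I j \<le> nat \<lceil>\<delta>\<rceil>"
      using total_deg_le_hdeg[of s I, OF assms] by linarith
  qed
qed (simp add: finite_PiE)

lemma coeff_bound_from_derivatives:
  fixes mul :: "(real, 'n::{finite,linorder}) vec \<Rightarrow> (real, 'n) vec \<Rightarrow> (real, 'n) vec"
    and s :: "'n \<Rightarrow> real" and \<delta> :: real
  defines "S \<equiv> {I. hdeg s I < \<delta>}"
  assumes "homogeneous_mul mul s" and "\<And>j. 1 \<le> s j"
    and supp: "\<And>I. c I \<noteq> 0 \<Longrightarrow> hdeg s I < \<delta>"
    and data: "\<And>I. hdeg s I < \<delta> \<Longrightarrow> \<bar>XI mul I (Pi_e c) 0\<bar> \<le> \<epsilon> powr (\<delta> - hdeg s I)"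
    and "I \<in> S"
  shows "\<bar>c I\<bar> \<le> (1 + (\<Sum>I\<in>S. \<Sum>J\<in>S. \<bar>XI mul I (eta_mono J) 0\<bar>)) ^ nat \<lceil>\<delta>\<rceil> * \<epsilon> powr (\<delta> - hdeg s I)"
proof (rule triangular_system_bound[where rk = total_deg])
  interpret homogeneous_mul mul s by fact
  show "finite S"
    unfolding S_def using assms(3) by (rule finite_hdeg_less)
  show "1 \<le> \<bar>XI mul J (eta_mono J) 0\<bar>" for J
    using prod_ge_1[of UNIV "\<lambda>j. fact (J j) :: real"]
    by (simp add: XI_eta_mono_at_0_self[OF smooth_unital_mul_axioms])
  show "total_deg J < total_deg I \<and> \<epsilon> powr (\<delta> - hdeg s J) \<le> \<epsilon> powr (\<delta> - hdeg s I)"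
    if "J \<noteq> I" "XI mul I (eta_mono J) 0 \<noteq> 0" for I J
    using XI_eta_mono_at_0_nonzero[OF assms(2) that(2)] that(1) by auto
  have "{I. c I \<noteq> 0} \<subseteq> S"
    using supp by (auto simp: S_def)
  then show "\<bar>\<Sum>J\<in>S. XI mul I (eta_mono J) 0 * c J\<bar> \<le> \<epsilon> powr (\<delta> - hdeg s I)" if "I \<in> S" for I
    using data that XI_Pi_e_at_0[OF smooth_unital_mul_axioms \<open>finite S\<close>] by (simp add: S_def)
  show "total_deg I \<le> nat \<lceil>\<delta>\<rceil>"
    using \<open>I \<in> S\<close> total_deg_le_hdeg[of s I, OF assms(3)] by (simp add: S_def) linarith
qed fact

theorem lemma3p9:
  fixes mul :: "(real, 'n::{finite,linorder}) vec \<Rightarrow> (real, 'n) vec \<Rightarrow> (real, 'n) vec"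
    and s :: "'n \<Rightarrow> real"
    and nrm :: "real \<Rightarrow> ((('n \<Rightarrow> nat) \<Rightarrow> real) \<Rightarrow> real)"
    and \<delta> :: real
  assumes smooth: "\<forall>i. smooth_fun (\<lambda>p::(real, 'n) vec \<times> (real, 'n) vec. mul (fst p) (snd p) $ i)"
    and assoc: "\<forall>x y z. mul (mul x y) z = mul x (mul y z)"
    and unit: "\<forall>x. mul 0 x = x \<and> mul x 0 = x"
    and inverse: "\<forall>x. \<exists>y. mul x y = 0 \<and> mul y x = 0"
    and exp_coords: "\<forall>x u v. mul (u *\<^sub>R x) (v *\<^sub>R x) = (u + v) *\<^sub>R x"
    and weights: "\<forall>j. s j \<ge> 1" "\<exists>j. s j = 1"
    and dilation_aut: "\<forall>r>0. \<forall>x y. mul (dil s r x) (dil s r y) = dil s r (mul x y)"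
    and norms: "\<forall>a. norm_on (grade_space s a) (nrm a)"
    and \<delta>_pos: "\<delta> > 0"
  shows "\<exists>C. \<forall>(c :: ('n \<Rightarrow> nat) \<Rightarrow> real) (\<epsilon>::real).
           (\<forall>I. c I \<noteq> 0 \<longrightarrow> hdeg s I < \<delta>) \<and> 0 \<le> \<epsilon> \<and> \<epsilon> \<le> 1 \<and>
           (\<forall>I. hdeg s I < \<delta> \<longrightarrow> \<bar>XI mul I (Pi_e c) 0\<bar> \<le> \<epsilon> powr (\<delta> - hdeg s I))
           \<longrightarrow> (\<forall>a\<le>\<delta>. nrm a (hcomp s c a) \<le> C * \<epsilon> powr (\<delta> - a))"
proof -
  (* Associativity, inverses, exponential coordinates, \<epsilon> \<le> 1 and \<delta> > 0 are not needed. *)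
  have hom: "homogeneous_mul mul s"
    using smooth unit dilation_aut by unfold_locales auto
  define S where "S = {I. hdeg s I < \<delta>}"
  define K where "K = (1 + (\<Sum>I\<in>S. \<Sum>J\<in>S. \<bar>XI mul I (eta_mono J) 0\<bar>)) ^ nat \<lceil>\<delta>\<rceil>"
  have "finite S"
    unfolding S_def using weights(1) by (intro finite_hdeg_less) auto
  have "nrm a (hcomp s c a) \<le> (K * (\<Sum>J\<in>S. nrm (hdeg s J) (basis_coeff J))) * \<epsilon> powr (\<delta> - a)"
    if supp: "\<forall>I. c I \<noteq> 0 \<longrightarrow> hdeg s I < \<delta>"
      and data: "\<forall>I. hdeg s I < \<delta> \<longrightarrow> \<bar>XI mul I (Pi_e c) 0\<bar> \<le> \<epsilon> powr (\<delta> - hdeg s I)"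
    for c \<epsilon> a
  proof -
    have "{I. c I \<noteq> 0} \<subseteq> S"
      using supp by (auto simp: S_def)
    moreover have "\<bar>c J\<bar> \<le> K * \<epsilon> powr (\<delta> - hdeg s J)" if "J \<in> S" for J
      using coeff_bound_from_derivatives[OF hom, where \<delta> = \<delta> and c = c and \<epsilon> = \<epsilon>] weights(1) supp data that
      unfolding K_def S_def by simp
    ultimately show ?thesis
      using norm_hcomp_le[OF norms[rule_format] \<open>finite S\<close>, of c "\<lambda>b. K * \<epsilon> powr (\<delta> - b)" a]
      by (simp add: K_def mult_ac sum_nonneg)
  qed
  then show ?thesis by blast
qed

end
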